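(* For the sequences generated by Algorithm IRG (with any stepsize rule), the direction sequence $\{d^k\}$ is gradient associated with $\{x^k\}$.
   Context: Algorithm IRG (general inexact reduced gradient framework). Let $f:\mathbb R^n\to\mathbb R$ be continuously differentiable. Parameters: initial point $x^1\in\mathbb R^n$, initial radii $\varepsilon_1>0$, $r_1>0$, reduction factors $\mu,\theta\in(0,1)$, and a sequence $\{\rho_k\}$ of positive numbers. For $k=1,2,\dots$: (1) choose $g^k\in\mathbb R^n$ with $\|g^k-\nabla f(x^k)\|\le\min\{\varepsilon_k,\rho_k\}$; (2) if $\|g^k\|\le r_k+\varepsilon_k$, set $r_{k+1}=\mu r_k$, $\varepsilon_{k+1}=\theta\varepsilon_k$, $d^k=0$; otherwise set $r_{k+1}=r_k$, $\varepsilon_{k+1}=\varepsilon_k$ and $d^k=-\frac{\|g^k\|-\varepsilon_k}{\|g^k\|}g^k$; (3) choose a stepsize $t_k>0$ by some rule; (4) set $x^{k+1}=x^k+t_kd^k$. A direction sequence $\{d^k\}$ is called gradient associated with $\{x^k\}$ if for every infinite set $J\subset\mathbb N$, $d^k\to0$ along $J$ implies $\nabla f(x^k)\to 0$ along $J$. *)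

theory Defs
  imports "HOL-Analysis.Analysis"
begin

text \<open>Convergence of a sequence along an index set J: the filter
  sequentially restricted to J.\<close>

definition gradient_associated ::
  "('a::real_normed_vector \<Rightarrow> 'a) \<Rightarrow> (nat \<Rightarrow> 'a) \<Rightarrow> (nat \<Rightarrow> 'a) \<Rightarrow> bool" where
  "gradient_associated gradf x d \<longleftrightarrow>
     (\<forall>J::nat set. infinite J \<longrightarrow>
        (d \<longlongrightarrow> 0) (inf sequentially (principal J)) \<longrightarrow>
        ((\<lambda>k. gradf (x k)) \<longlongrightarrow> 0) (inf sequentially (principal J)))"

end

theory Submission
  imports Defs
begin

text \<open>Since \<open>g\<^sup>k\<close> approximates \<open>\<nabla>f(x\<^sup>k)\<close> up to \<open>\<epsilon>\<^sub>k\<close>, every iteration satisfies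
  \<open>\<parallel>\<nabla>f(x\<^sup>k)\<parallel> \<le> \<parallel>d\<^sup>k\<parallel> + r\<^sub>k + 2\<epsilon>\<^sub>k\<close>. If null steps occur infinitely often, the
  nonincreasing radii \<open>r\<^sub>k\<close> and \<open>\<epsilon>\<^sub>k\<close> are contracted infinitely often and hence tend
  to zero, so \<open>d\<^sup>k \<rightarrow> 0\<close> along \<open>J\<close> forces \<open>\<nabla>f(x\<^sup>k) \<rightarrow> 0\<close> along \<open>J\<close>. Otherwise the radii
  are eventually constant and every later direction has norm
  \<open>\<parallel>g\<^sup>k\<parallel> - \<epsilon>\<^sub>k > r\<^sub>k\<close>, bounded away from zero, so \<open>d\<^sup>k\<close> cannot tend to zero along any
  infinite set.\<close>

lemma tendsto_zero_if_frequently_contracting: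
  fixes s :: "nat \<Rightarrow> real"
  assumes dec: "\<And>k. s (Suc k) \<le> s k" and nonneg: "\<And>k. 0 \<le> s k" and c: "c < 1"
    and contracting: "\<exists>\<^sub>F k in sequentially. s (Suc k) \<le> c * s k"
  shows "s \<longlonglongrightarrow> 0"
proof -
  obtain L where lim: "s \<longlonglongrightarrow> L" and L_le: "\<And>k. L \<le> s k"
    using decseq_convergent[of s 0] decseq_SucI[of s] dec nonneg by blast
  have "0 \<le> L"
    using lim nonneg by (intro LIMSEQ_le_const) auto
  moreover have "\<not> 0 < L"
  proof
    assume "0 < L"
    then have "c * L < L" using c by simp
    moreover have "(\<lambda>k. c * s k) \<longlonglongrightarrow> c * L"
      using lim by (intro tendsto_mult_left)
    ultimately have "\<forall>\<^sub>F k in sequentially. c * s k < L"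
      by (intro order_tendstoD(2))
    then have "\<forall>\<^sub>F k in sequentially. \<not> s (Suc k) \<le> c * s k"
      by (rule eventually_mono) (meson L_le not_le order_less_le_trans)
    then show False
      using contracting by (simp add: frequently_def)
  qed
  ultimately show ?thesis
    using lim by simp
qed

lemma inf_sequentially_principal_neq_bot:
  assumes "infinite (J :: nat set)"
  shows "inf sequentially (principal J) \<noteq> bot"
  using assms
  by (auto simp: trivial_limit_def eventually_inf_principal eventually_sequentially
      infinite_nat_iff_unbounded_le)

lemma norm_shrunk_vector:
  fixes v :: "'a::real_normed_vector"
  assumes "0 \<le> e" "e \<le> norm v"
  shows "norm (- ((norm v - e) / norm v) *\<^sub>R v) = norm v - e"
  using assms by (cases "v = 0") simp_all

locale inexact_reduced_gradient =
  fixes gradf :: "'a::real_normed_vector \<Rightarrow> 'a"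
    and x g d :: "nat \<Rightarrow> 'a"
    and eps r :: "nat \<Rightarrow> real"
    and \<mu> \<theta> :: real
  assumes eps_0_pos: "0 < eps 0" and r_0_pos: "0 < r 0"
    and mu: "0 < \<mu>" "\<mu> < 1" and theta: "0 < \<theta>" "\<theta> < 1"
    and grad_err: "\<And>k. norm (g k - gradf (x k)) \<le> eps k"
    and null_step: "\<And>k. norm (g k) \<le> r k + eps k \<Longrightarrow>
        r (Suc k) = \<mu> * r k \<and> eps (Suc k) = \<theta> * eps k \<and> d k = 0"
    and descent_step: "\<And>k. \<not> norm (g k) \<le> r k + eps k \<Longrightarrow>
        r (Suc k) = r k \<and> eps (Suc k) = eps k \<and>
        d k = - ((norm (g k) - eps k) / norm (g k)) *\<^sub>R g k"
begin

lemma radii_pos: "0 < eps k \<and> 0 < r k"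
proof (induction k)
  case 0
  then show ?case using eps_0_pos r_0_pos by simp
next
  case (Suc k)
  then show ?case
    using null_step[of k] descent_step[of k] mu theta
    by (cases "norm (g k) \<le> r k + eps k") auto
qed

lemma radii_Suc_le: "eps (Suc k) \<le> eps k \<and> r (Suc k) \<le> r k"
  using null_step[of k] descent_step[of k] mu theta radii_pos[of k]
  by (cases "norm (g k) \<le> r k + eps k") (simp_all add: mult_le_cancel_right1)

lemma norm_direction_descent_step:
  assumes "\<not> norm (g k) \<le> r k + eps k"
  shows "norm (d k) = norm (g k) - eps k"
  using descent_step[OF assms] norm_shrunk_vector[of "eps k" "g k"] assms radii_pos[of k]
  by simp

lemma norm_grad_le: "norm (gradf (x k)) \<le> norm (d k) + (r k + 2 * eps k)"
proof -
  have "norm (gradf (x k)) \<le> norm (g k) + eps k"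
    using norm_triangle_ineq2[of "gradf (x k)" "g k"] grad_err[of k]
    by (simp add: norm_minus_commute)
  then show ?thesis
    using norm_direction_descent_step[of k] null_step[of k] radii_pos[of k]
    by (cases "norm (g k) \<le> r k + eps k") auto
qed

lemma radii_tendsto_zero:
  assumes "\<exists>\<^sub>F k in sequentially. norm (g k) \<le> r k + eps k"
  shows "eps \<longlonglongrightarrow> 0" and "r \<longlonglongrightarrow> 0"
proof -
  show "eps \<longlonglongrightarrow> 0"
    using radii_Suc_le radii_pos theta
    by (intro tendsto_zero_if_frequently_contracting[of _ \<theta>] frequently_elim1[OF assms])
      (auto dest: null_step less_imp_le)
  show "r \<longlonglongrightarrow> 0"
    using radii_Suc_le radii_pos mu
    by (intro tendsto_zero_if_frequently_contracting[of _ \<mu>] frequently_elim1[OF assms])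
      (auto dest: null_step less_imp_le)
qed

lemma directions_bounded_away_from_zero:
  assumes "\<forall>\<^sub>F k in sequentially. \<not> norm (g k) \<le> r k + eps k"
  shows "\<exists>\<delta>>0. \<forall>\<^sub>F k in sequentially. \<delta> < norm (d k)"
proof -
  obtain N where descent: "\<And>k. N \<le> k \<Longrightarrow> \<not> norm (g k) \<le> r k + eps k"
    using assms by (auto simp: eventually_sequentially)
  have r_const: "r k = r N" if "N \<le> k" for k
    using that
  proof (induction rule: dec_induct)
    case (step k)
    then show ?case using descent_step[OF descent[of k]] by simp
  qed simp
  have "r N < norm (d k)" if "N \<le> k" for k
    using descent[OF that] norm_direction_descent_step[OF descent[OF that]] r_const[OF that]
    by simp
  then show ?thesis
    using radii_pos[of N] by (auto simp: eventually_sequentially)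
qed

theorem gradient_associated: "gradient_associated gradf x d"
  unfolding gradient_associated_def
proof (intro allI impI)
  fix J :: "nat set"
  let ?F = "inf sequentially (principal J)"
  assume J: "infinite J" and d_lim: "(d \<longlongrightarrow> 0) ?F"
  have F_le: "?F \<le> sequentially" by simp
  show "((\<lambda>k. gradf (x k)) \<longlongrightarrow> 0) ?F"
  proof (cases "\<exists>\<^sub>F k in sequentially. norm (g k) \<le> r k + eps k")
    case True
    have "(r \<longlongrightarrow> 0) ?F" "(eps \<longlongrightarrow> 0) ?F"
      using radii_tendsto_zero[OF True] by (auto intro: tendsto_mono[OF F_le])
    then have "((\<lambda>k. norm (d k) + (r k + 2 * eps k)) \<longlongrightarrow> 0 + (0 + 2 * 0)) ?F"
      by (intro tendsto_add tendsto_mult_left tendsto_norm_zero d_lim)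
    then have "((\<lambda>k. norm (d k) + (r k + 2 * eps k)) \<longlongrightarrow> 0) ?F"
      by simp
    moreover have "\<forall>\<^sub>F k in ?F. norm (gradf (x k)) \<le> norm (norm (d k) + (r k + 2 * eps k)) * 1"
      using order_trans[OF norm_grad_le abs_ge_self] by (intro always_eventually allI) simp
    ultimately show ?thesis
      by (rule tendsto_0_le)
  next
    case False
    then have "\<forall>\<^sub>F k in sequentially. \<not> norm (g k) \<le> r k + eps k"
      by (simp only: not_frequently)
    then obtain \<delta> where "0 < \<delta>" and "\<forall>\<^sub>F k in sequentially. \<delta> < norm (d k)"
      using directions_bounded_away_from_zero by blast
    then have "\<forall>\<^sub>F k in ?F. \<delta> < norm (d k) \<and> norm (d k) < \<delta>"
      using tendstoD[OF d_lim \<open>0 < \<delta>\<close>] filter_leD[OF F_le]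
      by (simp add: eventually_conj dist_norm)
    then have "?F = bot"
      unfolding trivial_limit_def by (rule eventually_mono) linarith
    with J show ?thesis
      using inf_sequentially_principal_neq_bot by blast
  qed
qed

end

theorem mainTheorem8:
  fixes f :: "'a::euclidean_space \<Rightarrow> real"
    and gradf :: "'a \<Rightarrow> 'a"
    and x g d :: "nat \<Rightarrow> 'a"
    and eps r rho t :: "nat \<Rightarrow> real"
    and \<mu> \<theta> :: real
  assumes grad: "\<And>y. (f has_derivative (\<lambda>h. gradf y \<bullet> h)) (at y)"
    and grad_cont: "continuous_on UNIV gradf"
    and eps0: "eps 0 > 0" and r0: "r 0 > 0"
    and mu: "0 < \<mu>" "\<mu> < 1" and theta: "0 < \<theta>" "\<theta> < 1"
    and rho: "\<And>k. rho k > 0"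
    and g_err: "\<And>k. norm (g k - gradf (x k)) \<le> min (eps k) (rho k)"
    and null_step: "\<And>k. norm (g k) \<le> r k + eps k \<Longrightarrow>
        r (Suc k) = \<mu> * r k \<and> eps (Suc k) = \<theta> * eps k \<and> d k = 0"
    and descent_step: "\<And>k. \<not> norm (g k) \<le> r k + eps k \<Longrightarrow>
        r (Suc k) = r k \<and> eps (Suc k) = eps k \<and>
        d k = - ((norm (g k) - eps k) / norm (g k)) *\<^sub>R g k"
    and t_pos: "\<And>k. t k > 0"
    and x_upd: "\<And>k. x (Suc k) = x k + t k *\<^sub>R d k"
  shows "gradient_associated gradf x d"
proof -
  interpret inexact_reduced_gradient gradf x g d eps r \<mu> \<theta>
    using eps0 r0 mu theta null_step descent_step g_err
    by unfold_locales (auto intro: order_trans[OF g_err])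
  show ?thesis by (rule gradient_associated)
qed

end
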